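(* Let $(V,\|\cdot\|)$ be a normed plane and let $x,y\in V$ be distinct points such that $[xy]$ is parallel to a nondegenerate segment contained in the unit circle $S$. Let $p$ and $q$ be the centers of the two circles which contain $[xy]$ as a maximal segment, and let $l_p$ and $l_q$ be the lines through $p$ and $q$, respectively, parallel to $\langle xy\rangle$. Then $\mathrm{bis}(x,y)\cap\mathrm{conv}(l_p\cup l_q)$ is a curve from $p$ to $q$ which is homeomorphic to a compact interval.
   Context: A normed (Minkowski) plane $(V,\|\cdot\|)$ is a two-dimensional real vector space with a norm; $S=\{v:\|v\|=1\}$ is its unit circle. For $x,y\in V$, $[xy]$ denotes the closed segment and $\langle xy\rangle$ the line through $x,y$. For distinct $x,y$, $\mathrm{bis}(x,y)=\{z\in V:\|z-x\|=\|z-y\|\}$. A circle with center $c$ and radius $\lambda>0$ is $c+\lambda S$. A maximal segment of a circle is a nondegenerate segment contained in the circle that is not properly contained in any other segment contained in that circle. Fact used in the statement: if $[xy]$ is parallel to a nondegenerate segment of $S$, then there are exactly two circles containing $[xy]$ as a maximal segment, and their centers lie in the two different open half-planes determined by $\langle xy\rangle$. *)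

theory Defs
  imports "HOL-Analysis.Analysis"
begin

definition is_norm :: "(real^2 \<Rightarrow> real) \<Rightarrow> bool" where
  "is_norm N \<longleftrightarrow>
     (\<forall>v. 0 \<le> N v) \<and> (\<forall>v. N v = 0 \<longleftrightarrow> v = 0) \<and>
     (\<forall>c v. N (c *\<^sub>R v) = \<bar>c\<bar> * N v) \<and>
     (\<forall>v w. N (v + w) \<le> N v + N w)"

definition unit_circle :: "(real^2 \<Rightarrow> real) \<Rightarrow> (real^2) set" where
  "unit_circle N = {v. N v = 1}"

definition ncircle :: "(real^2 \<Rightarrow> real) \<Rightarrow> real^2 \<Rightarrow> real \<Rightarrow> (real^2) set" where
  "ncircle N c r = {v. N (v - c) = r}"

definition bis :: "(real^2 \<Rightarrow> real) \<Rightarrow> real^2 \<Rightarrow> real^2 \<Rightarrow> (real^2) set" where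
  "bis N x y = {z. N (z - x) = N (z - y)}"

definition seg_parallel :: "real^2 \<Rightarrow> real^2 \<Rightarrow> real^2 \<Rightarrow> real^2 \<Rightarrow> bool" where
  "seg_parallel u v a b \<longleftrightarrow> (\<exists>t. b - a = t *\<^sub>R (v - u))"

definition maximal_segment :: "(real^2) set \<Rightarrow> real^2 \<Rightarrow> real^2 \<Rightarrow> bool" where
  "maximal_segment C u v \<longleftrightarrow>
     u \<noteq> v \<and> closed_segment u v \<subseteq> C \<and>
     (\<forall>u' v'. closed_segment u v \<subseteq> closed_segment u' v' \<and> closed_segment u' v' \<subseteq> C
        \<longrightarrow> closed_segment u' v' = closed_segment u v)"

definition par_line :: "real^2 \<Rightarrow> real^2 \<Rightarrow> (real^2) set" where
  "par_line p d = {p + t *\<^sub>R d | t. True}"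

end

theory Submission
  imports Defs
begin

text \<open>Let \<open>d = y - x\<close> and measure how far a point lies across the direction \<open>d\<close> by the
linear form \<open>wedge d\<close>. On every line parallel to \<open>d\<close> the function \<open>t \<mapsto> N (w + t d)\<close> is
convex, so its unit increments are nondecreasing and the bisector meets every such line.
If it met one line twice, \<open>N\<close> would be constant on a segment parallel to \<open>d\<close> and
longer than \<open>[xy]\<close>. A homothety carries the circles through that segment onto the circles
about \<open>p\<close> and \<open>q\<close>, which lie on opposite sides of \<open>\<langle>xy\<rangle>\<close> and have equal radius;
maximality of \<open>[xy]\<close> then forces that line to lie outside the strip between \<open>l\<^sub>p\<close> and
\<open>l\<^sub>q\<close>. Hence \<open>wedge d\<close> maps the compact set \<open>bis(x,y) \<inter> conv(l\<^sub>p \<union> l\<^sub>q)\<close>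
continuously and bijectively onto the segment between \<open>wedge d p\<close> and \<open>wedge d q\<close>, and its
inverse is the arc.\<close>

lemma convex_on_three_points:
  fixes g :: "real \<Rightarrow> real"
  assumes "convex_on UNIV g" "a < b" "b < c"
  shows "(c - a) * g b \<le> (c - b) * g a + (b - a) * g c"
proof -
  define \<mu> where "\<mu> = (b - a) / (c - a)"
  have \<mu>: "0 \<le> \<mu>" "\<mu> \<le> 1" using assms by (auto simp: \<mu>_def field_simps)
  have e\<mu>: "(c - a) * \<mu> = b - a" using assms by (simp add: \<mu>_def)
  then have e1\<mu>: "(c - a) * (1 - \<mu>) = c - b" by (simp add: right_diff_distrib)
  have "(1 - \<mu>) * a + \<mu> * c = b" using e\<mu> by (simp add: algebra_simps)
  then have "g b \<le> (1 - \<mu>) * g a + \<mu> * g c"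
    using convex_onD[OF assms(1) \<mu>, of a c] by simp
  then have "(c - a) * g b \<le> (c - a) * ((1 - \<mu>) * g a + \<mu> * g c)"
    by (rule mult_left_mono) (use assms in simp)
  also have "\<dots> = ((c - a) * (1 - \<mu>)) * g a + ((c - a) * \<mu>) * g c"
    by (simp add: algebra_simps)
  finally show ?thesis unfolding e\<mu> e1\<mu> .
qed

lemma convex_on_ge_outside:
  fixes g :: "real \<Rightarrow> real"
  assumes g: "convex_on UNIV g" and "a < b" "g a = c" "g b = c" "\<tau> \<le> a \<or> b \<le> \<tau>"
  shows "c \<le> g \<tau>"
proof -
  consider "\<tau> < a" | "\<tau> = a \<or> \<tau> = b" | "b < \<tau>" using assms by linarith
  then show ?thesis
  proof cases
    case 1
    then have "(b - \<tau>) * c \<le> (b - a) * g \<tau> + (a - \<tau>) * c"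
      using convex_on_three_points[OF g, of \<tau> a b] assms by simp
    then have "(b - a) * c \<le> (b - a) * g \<tau>" by (simp add: algebra_simps)
    then show ?thesis using assms by simp
  next
    case 3
    then have "(\<tau> - a) * c \<le> (\<tau> - b) * c + (b - a) * g \<tau>"
      using convex_on_three_points[OF g, of a b \<tau>] assms by simp
    then have "(b - a) * c \<le> (b - a) * g \<tau>" by (simp add: algebra_simps)
    then show ?thesis using assms by simp
  qed (use assms in auto)
qed

lemma convex_on_le_between:
  fixes g :: "real \<Rightarrow> real"
  assumes g: "convex_on UNIV g" and "g a = c" "g b = c" "a \<le> \<tau>" "\<tau> \<le> b"
  shows "g \<tau> \<le> c"
proof (cases "a < \<tau> \<and> \<tau> < b")
  case True
  then have "(b - a) * g \<tau> \<le> (b - a) * c"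
    using convex_on_three_points[OF g, of a \<tau> b] assms by (simp add: algebra_simps)
  then show ?thesis using True by simp
qed (use assms in \<open>auto simp: antisym_conv1\<close>)

lemma convex_on_const_between:
  fixes g :: "real \<Rightarrow> real"
  assumes g: "convex_on UNIV g" and "a < a'" "a' < b" "b < b'"
    and "g a = c" "g a' = c" "g b = c" "g b' = c" "a \<le> \<tau>" "\<tau> \<le> b'"
  shows "g \<tau> = c"
proof -
  have "c \<le> g \<tau>"
  proof (cases "\<tau> \<le> a'")
    case True then show ?thesis using convex_on_ge_outside[OF g, of a' b] assms by simp
  next
    case False then show ?thesis using convex_on_ge_outside[OF g, of a a'] assms by simp
  qed
  moreover have "g \<tau> \<le> c" using convex_on_le_between[OF g, of a c b'] assms by simp
  ultimately show ?thesis by simp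
qed

lemma convex_on_increment_mono:
  fixes g :: "real \<Rightarrow> real"
  assumes g: "convex_on UNIV g" and "s < s'"
  shows "g s - g (s - 1) \<le> g s' - g (s' - 1)"
proof -
  consider "s' - 1 < s" | "s' - 1 = s" | "s < s' - 1" by linarith
  then show ?thesis
  proof cases
    case 1
    define a where "a = s' - s"
    have a: "0 < a" "a < 1" using 1 assms by (auto simp: a_def)
    have "g (s' - 1) - g (s - 1) \<le> a * (g s - g (s - 1))"
      using convex_on_three_points[OF g, of "s - 1" "s' - 1" s] 1 assms by (simp add: a_def algebra_simps)
    moreover have "g s - g (s' - 1) \<le> (1 - a) * (g s' - g (s' - 1))"
      using convex_on_three_points[OF g, of "s' - 1" s s'] 1 assms by (simp add: a_def algebra_simps)
    ultimately have "(1 - a) * (g s - g (s - 1)) \<le> (1 - a) * (g s' - g (s' - 1))"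
      by (simp add: algebra_simps)
    then show ?thesis using a by simp
  next
    case 2
    then show ?thesis using convex_on_three_points[OF g, of "s - 1" s "s + 1"] by (simp add: algebra_simps)
  next
    case 3
    define b where "b = s' - s - 1"
    have b: "0 < b" using 3 by (simp add: b_def)
    have "b * (g s - g (s - 1)) \<le> g (s' - 1) - g s"
      using convex_on_three_points[OF g, of "s - 1" s "s' - 1"] 3 by (simp add: b_def algebra_simps)
    moreover have "g (s' - 1) - g s \<le> b * (g s' - g (s' - 1))"
      using convex_on_three_points[OF g, of s "s' - 1" s'] 3 by (simp add: b_def algebra_simps)
    ultimately show ?thesis using b by (meson mult_le_cancel_left_pos order.trans)
  qed
qed

text \<open>Up to sign the determinant of \<open>d\<close> and \<open>v\<close>; its level sets are the lines parallel to \<open>d\<close>.\<close>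

definition wedge :: "real^2 \<Rightarrow> real^2 \<Rightarrow> real" where
  "wedge d v = v$1 * d$2 - v$2 * d$1"

lemma wedge_add [simp]: "wedge d (u + v) = wedge d u + wedge d v"
  and wedge_diff [simp]: "wedge d (u - v) = wedge d u - wedge d v"
  and wedge_scaleR [simp]: "wedge d (c *\<^sub>R v) = c * wedge d v"
  and wedge_minus [simp]: "wedge d (- v) = - wedge d v"
  and wedge_self [simp]: "wedge d d = 0"
  and wedge_0_left [simp]: "wedge 0 v = 0"
  by (simp_all add: wedge_def algebra_simps)

lemma linear_wedge: "linear (wedge d)"
  by (rule linearI) simp_all

lemma continuous_on_wedge [continuous_intros]:
  "continuous_on S f \<Longrightarrow> continuous_on S (\<lambda>v. wedge d (f v))"
  unfolding wedge_def by (intro continuous_intros)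

lemma wedge_eq_0_iff:
  assumes "d \<noteq> 0" shows "wedge d v = 0 \<longleftrightarrow> (\<exists>t. v = t *\<^sub>R d)"
proof
  assume v: "wedge d v = 0"
  show "\<exists>t. v = t *\<^sub>R d"
  proof (cases "d$1 = 0")
    case True
    then have "d$2 \<noteq> 0" using assms by (metis exhaust_2 vec_eq_iff zero_index)
    then show ?thesis using v True
      by (intro exI[of _ "v$2 / d$2"]) (auto simp: vec_eq_iff forall_2 wedge_def)
  next
    case False
    then show ?thesis using v
      by (intro exI[of _ "v$1 / d$1"]) (auto simp: vec_eq_iff forall_2 wedge_def field_simps)
  qed
qed auto

lemma wedge_surj:
  assumes "d \<noteq> 0" shows "\<exists>n. wedge d n = 1"
proof (cases "d$2 = 0")
  case True
  then have "d$1 \<noteq> 0" using assms by (metis exhaust_2 vec_eq_iff zero_index)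
  then have "wedge d (axis 2 (- 1 / d$1)) = 1" using True by (simp add: wedge_def axis_def)
  then show ?thesis ..
next
  case False
  then have "wedge d (axis 1 (1 / d$2)) = 1" by (simp add: wedge_def axis_def)
  then show ?thesis ..
qed

lemma wedge_decompose:
  assumes "wedge d n = 1" shows "\<exists>t. v = wedge d v *\<^sub>R n + t *\<^sub>R d"
proof -
  have "d \<noteq> 0" using assms by auto
  moreover have "wedge d (v - wedge d v *\<^sub>R n) = 0" using assms by simp
  ultimately obtain t where "v - wedge d v *\<^sub>R n = t *\<^sub>R d" using wedge_eq_0_iff by blast
  then show ?thesis by (metis diff_add_cancel add.commute)
qed

lemma convex_hull_parallel_lines:
  assumes d: "d \<noteq> 0"
  shows "convex hull (par_line p d \<union> par_line q d) =
         {v. wedge d v \<in> closed_segment (wedge d p) (wedge d q)}" (is "?H = ?S")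
proof
  have "convex ?S"
    using convex_linear_vimage[OF linear_wedge convex_closed_segment] by (simp add: vimage_def)
  moreover have "par_line p d \<union> par_line q d \<subseteq> ?S" by (auto simp: par_line_def)
  ultimately show "?H \<subseteq> ?S" by (rule hull_minimal[rotated])
next
  show "?S \<subseteq> ?H"
  proof
    fix v assume "v \<in> ?S"
    then obtain l where l: "0 \<le> l" "l \<le> 1" "wedge d v = (1 - l) * wedge d p + l * wedge d q"
      by (auto simp: in_segment)
    then have "wedge d (v - ((1 - l) *\<^sub>R p + l *\<^sub>R q)) = 0" by simp
    then obtain t where t: "v - ((1 - l) *\<^sub>R p + l *\<^sub>R q) = t *\<^sub>R d" using wedge_eq_0_iff d by blast
    have "p + t *\<^sub>R d \<in> ?H" "q + t *\<^sub>R d \<in> ?H" by (auto intro: hull_inc simp: par_line_def)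
    then have "(1 - l) *\<^sub>R (p + t *\<^sub>R d) + l *\<^sub>R (q + t *\<^sub>R d) \<in> ?H"
      using l by (intro convexD) auto
    moreover have "(1 - l) *\<^sub>R (p + t *\<^sub>R d) + l *\<^sub>R (q + t *\<^sub>R d) = v"
      using t by (simp add: algebra_simps)
    ultimately show "v \<in> ?H" by simp
  qed
qed

lemma closed_segment_on_line:
  fixes x d :: "'a::real_vector"
  assumes "m \<le> M"
  shows "closed_segment (x + m *\<^sub>R d) (x + M *\<^sub>R d) = (\<lambda>t. x + t *\<^sub>R d) ` {m..M}"
proof -
  have "closed_segment (x + m *\<^sub>R d) (x + M *\<^sub>R d) = (+) x ` (\<lambda>t. t *\<^sub>R d) ` closed_segment m M"
    using closed_segment_translation closed_segment_linear_image[OF linear_scaleR_left] by metis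
  then show ?thesis using assms by (simp add: closed_segment_eq_real_ivl image_image)
qed

lemma closed_segment_real_symmetric:
  fixes a c r :: real
  shows "c \<in> closed_segment (a - r) (a + r) \<longleftrightarrow> \<bar>c - a\<bar> \<le> \<bar>r\<bar>"
  by (auto simp: closed_segment_eq_real_ivl abs_le_iff)

lemma arc_of_injective_map_onto_segment:
  fixes f :: "'a::t2_space \<Rightarrow> real"
  assumes "compact K" "continuous_on K f" "inj_on f K" "f ` K = closed_segment (f u) (f v)"
    and "u \<in> K" "v \<in> K" "u \<noteq> v"
  shows "\<exists>g. arc g \<and> pathstart g = u \<and> pathfinish g = v \<and> path_image g = K"
proof -
  let ?I = "closed_segment (f u) (f v)"
  obtain h where h: "homeomorphism K ?I f h"
    using homeomorphism_compact[OF assms(1,2,4,3)] by blast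
  have "f u \<noteq> f v" using assms(3,5-7) by (auto dest: inj_onD)
  then have lp: "arc (linepath (f u) (f v))" by simp
  define g where "g = h \<circ> linepath (f u) (f v)"
  have "arc g" unfolding g_def arc_def
  proof
    show "path (h \<circ> linepath (f u) (f v))"
      using lp homeomorphism_cont2[OF h] by (intro path_continuous_image) (simp_all add: arc_imp_path)
    have "inj_on h ?I" using homeomorphism_apply2[OF h] by (metis inj_on_inverseI)
    then show "inj_on (h \<circ> linepath (f u) (f v)) {0..1}"
      using arc_imp_inj_on[OF lp] by (intro comp_inj_on) (simp_all flip: path_image_def)
  qed
  moreover have "pathstart g = u" "pathfinish g = v"
    using homeomorphism_apply1[OF h] assms(5,6) by (simp_all add: g_def pathstart_compose pathfinish_compose)
  moreover have "path_image g = K"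
    using homeomorphism_image2[OF h] by (simp add: g_def path_image_compose)
  ultimately show ?thesis by blast
qed

locale plane_norm =
  fixes N :: "real^2 \<Rightarrow> real"
  assumes is_norm: "is_norm N"
begin

lemma N_nonneg: "0 \<le> N v"
  and N_eq_0_iff: "N v = 0 \<longleftrightarrow> v = 0"
  and N_scaleR: "N (c *\<^sub>R v) = \<bar>c\<bar> * N v"
  and N_triangle: "N (v + w) \<le> N v + N w"
  using is_norm by (simp_all add: is_norm_def)

lemma N_0 [simp]: "N 0 = 0"
  using N_eq_0_iff by simp

lemma N_minus: "N (- v) = N v"
  using N_scaleR[of "-1" v] by simp

lemma N_commute: "N (a - b) = N (b - a)"
  using N_minus[of "a - b"] by simp

lemma N_pos: "v \<noteq> 0 \<Longrightarrow> 0 < N v"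
  using N_nonneg N_eq_0_iff by (metis order_le_less)

lemma convex_on_N: "convex_on UNIV N"
proof (rule convex_onI)
  fix t :: real and u v assume "0 < t" "t < 1"
  then show "N ((1 - t) *\<^sub>R u + t *\<^sub>R v) \<le> (1 - t) * N u + t * N v"
    using N_triangle[of "(1 - t) *\<^sub>R u" "t *\<^sub>R v"] by (simp add: N_scaleR)
qed simp

lemma continuous_on_N [continuous_intros]:
  "continuous_on S f \<Longrightarrow> continuous_on S (\<lambda>v. N (f v))"
  using continuous_on_compose2[OF convex_on_continuous[OF open_UNIV convex_on_N]] by blast

lemma convex_on_N_line: "convex_on UNIV (\<lambda>t. N (w + t *\<^sub>R d))"
proof (rule convex_onI)
  fix \<mu> a b :: real assume "0 < \<mu>" "\<mu> < 1"
  moreover have "w + ((1 - \<mu>) *\<^sub>R a + \<mu> *\<^sub>R b) *\<^sub>R d = (1 - \<mu>) *\<^sub>R (w + a *\<^sub>R d) + \<mu> *\<^sub>R (w + b *\<^sub>R d)"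
    by (simp add: algebra_simps)
  ultimately show "N (w + ((1 - \<mu>) *\<^sub>R a + \<mu> *\<^sub>R b) *\<^sub>R d) \<le> (1 - \<mu>) * N (w + a *\<^sub>R d) + \<mu> * N (w + b *\<^sub>R d)"
    using convex_onD[OF convex_on_N, of \<mu> "w + a *\<^sub>R d" "w + b *\<^sub>R d"] by simp
qed simp

lemma N_line_increment_pos:
  assumes d: "d \<noteq> 0" and t: "1 + 2 * N a / N d < t"
  shows "N (a + (t - 1) *\<^sub>R d) < N (a + t *\<^sub>R d)"
proof -
  have Nd: "0 < N d" using N_pos d by blast
  have "0 \<le> 2 * N a / N d" using Nd N_nonneg[of a] by simp
  then have t1: "0 < t - 1" using t by linarith
  have "2 * N a < (t - 1) * N d" using t Nd by (simp add: field_simps)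
  also have "(t - 1) * N d \<le> N (a + (t - 1) *\<^sub>R d) + N a"
    using N_triangle[of "a + (t - 1) *\<^sub>R d" "- a"] t1 by (simp add: N_scaleR N_minus)
  finally have "N a < N (a + (t - 1) *\<^sub>R d)" by simp
  moreover have "t * N (a + (t - 1) *\<^sub>R d) \<le> 1 * N a + (t - 1) * N (a + t *\<^sub>R d)"
    using convex_on_three_points[OF convex_on_N_line, of 0 "t - 1" t] t1 by simp
  ultimately have "(t - 1) * N (a + (t - 1) *\<^sub>R d) < (t - 1) * N (a + t *\<^sub>R d)"
    by (simp add: algebra_simps)
  then show ?thesis using t1 by simp
qed

lemma N_line_increment_neg:
  assumes "d \<noteq> 0" and "t < - (2 * N a / N d)"
  shows "N (a + t *\<^sub>R d) < N (a + (t - 1) *\<^sub>R d)"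
proof -
  have "N (a + ((1 - t) - 1) *\<^sub>R (- d)) < N (a + (1 - t) *\<^sub>R (- d))"
    using assms by (intro N_line_increment_pos) (simp_all add: N_minus)
  then show ?thesis by (simp add: algebra_simps)
qed

lemma bisector_meets_line:
  assumes d: "d \<noteq> 0" shows "\<exists>t. N (a + t *\<^sub>R d) = N (a + (t - 1) *\<^sub>R d)"
proof -
  define G where "G t = N (a + t *\<^sub>R d) - N (a + (t - 1) *\<^sub>R d)" for t
  define T where "T = 2 + 2 * N a / N d"
  have T: "0 \<le> 2 * N a / N d" using N_pos[OF d] N_nonneg[of a] by simp
  have "G (- T) < 0" using N_line_increment_neg[OF d, of "- T"] T by (simp add: G_def T_def)
  moreover have "0 < G T" using N_line_increment_pos[OF d, of a T] by (simp add: G_def T_def)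
  moreover have "continuous_on {- T..T} G" unfolding G_def by (intro continuous_intros)
  ultimately obtain t where "G t = 0" using IVT'[of G "- T" 0 T] T by (force simp: T_def)
  then show ?thesis by (auto simp: G_def)
qed

lemma bisector_offset_bound:
  assumes d: "d \<noteq> 0" and eq: "N (a + t *\<^sub>R d) = N (a + (t - 1) *\<^sub>R d)"
  shows "\<bar>t\<bar> \<le> 1 + 2 * N a / N d"
  using N_line_increment_pos[OF d, of a t] N_line_increment_neg[OF d, of t a] eq by linarith


definition circle_seg :: "real^2 \<Rightarrow> real^2 \<Rightarrow> real \<Rightarrow> real \<Rightarrow> real \<Rightarrow> bool" where
  "circle_seg d w c \<alpha> \<beta> \<longleftrightarrow> \<alpha> < \<beta> \<and> 0 < c \<and> (\<forall>t\<in>{\<alpha>..\<beta>}. N (w + t *\<^sub>R d) = c)"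

lemma circle_seg_lower_bound:
  assumes "circle_seg d w c \<alpha> \<beta>" shows "c \<le> N (w + \<tau> *\<^sub>R d)"
proof (cases "\<tau> \<in> {\<alpha>..\<beta>}")
  case False
  then show ?thesis using assms convex_on_ge_outside[OF convex_on_N_line, of \<alpha> \<beta> w d c \<tau>]
    by (auto simp: circle_seg_def)
qed (use assms in \<open>simp add: circle_seg_def\<close>)

lemma circle_seg_fill:
  assumes "circle_seg d w c \<alpha> \<beta>" "N (w + a *\<^sub>R d) = c" "N (w + b *\<^sub>R d) = c" "a \<le> \<tau>" "\<tau> \<le> b"
  shows "N (w + \<tau> *\<^sub>R d) = c"
proof (rule order_antisym)
  show "N (w + \<tau> *\<^sub>R d) \<le> c"
    by (rule convex_on_le_between[OF convex_on_N_line]) (use assms in auto)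
qed (rule circle_seg_lower_bound[OF assms(1)])

lemma circle_seg_reflect:
  assumes "circle_seg d w c \<alpha> \<beta>" shows "circle_seg d (- w - (\<alpha> + \<beta>) *\<^sub>R d) c \<alpha> \<beta>"
  unfolding circle_seg_def
proof (intro conjI ballI)
  fix t assume t: "t \<in> {\<alpha>..\<beta>}"
  have "- w - (\<alpha> + \<beta>) *\<^sub>R d + t *\<^sub>R d = - (w + (\<alpha> + \<beta> - t) *\<^sub>R d)"
    by (simp add: algebra_simps)
  then have "N (- w - (\<alpha> + \<beta>) *\<^sub>R d + t *\<^sub>R d) = N (w + (\<alpha> + \<beta> - t) *\<^sub>R d)"
    by (simp only: N_minus)
  then show "N (- w - (\<alpha> + \<beta>) *\<^sub>R d + t *\<^sub>R d) = c"
    using assms t by (simp add: circle_seg_def)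
qed (use assms in \<open>auto simp: circle_seg_def\<close>)

lemma circle_seg_wedge_nonzero:
  assumes d: "d \<noteq> 0" and s: "circle_seg d w c \<alpha> \<beta>" shows "wedge d w \<noteq> 0"
proof
  assume "wedge d w = 0"
  then obtain t where "w = t *\<^sub>R d" using wedge_eq_0_iff[OF d] by blast
  then have "w + (- t) *\<^sub>R d = 0" by simp
  then show False using circle_seg_lower_bound[OF s, of "- t"] s by (simp add: circle_seg_def)
qed

lemma circle_seg_support:
  assumes d: "d \<noteq> 0" and s: "circle_seg d w c \<alpha> \<beta>"
  shows "c * \<bar>wedge d v\<bar> \<le> \<bar>wedge d w\<bar> * N v"
proof (cases "wedge d v = 0")
  case False
  define u where "u = (wedge d w / wedge d v) *\<^sub>R v"
  have "wedge d (u - w) = 0" using False by (simp add: u_def)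
  then obtain t where "u - w = t *\<^sub>R d" using wedge_eq_0_iff[OF d] by blast
  then have "c \<le> N u" using circle_seg_lower_bound[OF s, of t] by (metis add.commute diff_add_cancel)
  also have "N u = \<bar>wedge d w\<bar> * N v / \<bar>wedge d v\<bar>" by (simp add: u_def N_scaleR abs_divide)
  finally show ?thesis using False by (simp add: le_divide_eq mult.commute)
qed (use N_nonneg in simp)

lemma circle_seg_level_ratio:
  assumes d: "d \<noteq> 0" and s1: "circle_seg d w1 c1 \<alpha>1 \<beta>1" and s2: "circle_seg d w2 c2 \<alpha>2 \<beta>2"
  shows "c2 * \<bar>wedge d w1\<bar> = c1 * \<bar>wedge d w2\<bar>"
proof -
  have "N (w1 + \<alpha>1 *\<^sub>R d) = c1" "N (w2 + \<alpha>2 *\<^sub>R d) = c2"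
    using s1 s2 by (auto simp: circle_seg_def)
  then show ?thesis
    using circle_seg_support[OF d s1, of "w2 + \<alpha>2 *\<^sub>R d"] circle_seg_support[OF d s2, of "w1 + \<alpha>1 *\<^sub>R d"]
    by (simp add: mult.commute)
qed

text \<open>The increments \<open>N (w + t d) - N (w + (t - 1) d)\<close> are nondecreasing in \<open>t\<close>; vanishing at
\<open>0\<close> and \<open>\<epsilon>\<close>, they vanish in between, which makes \<open>N (w + t d)\<close> constant for
\<open>-1 \<le> t \<le> min \<epsilon> (1/2)\<close>.\<close>

lemma bisector_twice_circle_seg:
  assumes d: "d \<noteq> 0" and \<epsilon>: "0 < \<epsilon>"
    and eq0: "N w = N (w - d)" and eq\<epsilon>: "N (w + \<epsilon> *\<^sub>R d) = N (w + (\<epsilon> - 1) *\<^sub>R d)"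
  shows "\<exists>c e. 0 < e \<and> circle_seg d w c (- 1) e"
proof -
  define h where "h t = N (w + t *\<^sub>R d)" for t
  have h: "convex_on UNIV h" unfolding h_def by (rule convex_on_N_line)
  define e where "e = min \<epsilon> (1 / 2)"
  have e: "0 < e" "e < 1" "e \<le> \<epsilon>" using \<epsilon> by (auto simp: e_def)
  define c where "c = h 0"
  have hm1: "h (- 1) = c" using eq0 by (simp add: h_def c_def)
  have h\<epsilon>: "h \<epsilon> = h (\<epsilon> - 1)" using eq\<epsilon> by (simp add: h_def)
  have he: "h e = h (e - 1)"
  proof (cases "e = \<epsilon>")
    case False
    then have "h e - h (e - 1) \<le> h \<epsilon> - h (\<epsilon> - 1)"
      using e by (intro convex_on_increment_mono[OF h]) simp
    moreover have "h 0 - h (0 - 1) \<le> h e - h (e - 1)"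
      using e by (intro convex_on_increment_mono[OF h])
    ultimately show ?thesis using hm1 h\<epsilon> by (simp add: c_def)
  qed (use h\<epsilon> in simp)
  have c: "0 < c"
  proof -
    have "w \<noteq> 0 \<or> w - d \<noteq> 0" using d by auto
    then have "0 < N w \<or> 0 < N (w - d)" using N_pos by blast
    then show ?thesis using eq0 by (simp add: c_def h_def)
  qed
  have "h (e - 1) \<le> c"
    by (rule convex_on_le_between[OF h, of "- 1"]) (use hm1 e in \<open>auto simp: c_def\<close>)
  moreover have "c \<le> h (e - 1)"
  proof -
    have "1 * h 0 \<le> e * h (e - 1) + (1 - e) * h e"
      using convex_on_three_points[OF h, of "e - 1" 0 e] e by simp
    then have "c \<le> e * h (e - 1) + (1 - e) * h (e - 1)" unfolding he c_def by simp
    then show ?thesis by (simp add: algebra_simps)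
  qed
  ultimately have hem1: "h (e - 1) = c" by simp
  have "h t = c" if "t \<in> {- 1..e}" for t
    by (rule convex_on_const_between[OF h, of "- 1" "e - 1" 0 e])
      (use that e hm1 hem1 he in \<open>simp_all add: c_def\<close>)
  then have "circle_seg d w c (- 1) e" using e c by (auto simp: circle_seg_def h_def)
  then show ?thesis using e by blast
qed

lemma maximal_segment_circle_seg:
  assumes "maximal_segment (ncircle N c r) x y" "0 < r"
  shows "circle_seg (y - x) (x - c) r 0 1"
proof -
  have "(\<lambda>t. x + t *\<^sub>R (y - x)) ` {0..1} \<subseteq> ncircle N c r"
    using assms closed_segment_on_line[of 0 1 x "y - x"] by (simp add: maximal_segment_def)
  then show ?thesis using assms(2) by (auto simp: circle_seg_def ncircle_def algebra_simps)
qed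

lemma maximal_segment_line_bound:
  assumes mx: "maximal_segment (ncircle N c r) x y" and r: "0 < r" and ab: "a \<le> b"
    and on: "\<forall>\<tau>\<in>{a..b}. N (x - c + \<tau> *\<^sub>R (y - x)) = r"
  shows "0 \<le> a \<and> b \<le> 1"
proof -
  define d where "d = y - x"
  have d: "d \<noteq> 0" using mx by (auto simp: maximal_segment_def d_def)
  have s: "circle_seg d (x - c) r 0 1" using maximal_segment_circle_seg[OF mx r] by (simp add: d_def)
  define m where "m = min 0 a"
  define M where "M = max 1 b"
  have mM: "m \<le> 0" "1 \<le> M" by (auto simp: m_def M_def)
  have "m \<in> {0..1} \<union> {a..b}" "M \<in> {0..1} \<union> {a..b}" using ab by (auto simp: m_def M_def)
  then have "N (x - c + m *\<^sub>R d) = r" "N (x - c + M *\<^sub>R d) = r"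
    using on s by (auto simp: d_def circle_seg_def)
  then have "N (x - c + t *\<^sub>R d) = r" if "m \<le> t" "t \<le> M" for t
    using circle_seg_fill[OF s] that by blast
  moreover have seg01: "closed_segment x y = (\<lambda>t. x + t *\<^sub>R d) ` {0..1}"
    using closed_segment_on_line[of 0 1 x d] by (simp add: d_def)
  moreover have segmM: "closed_segment (x + m *\<^sub>R d) (x + M *\<^sub>R d) = (\<lambda>t. x + t *\<^sub>R d) ` {m..M}"
    using mM by (simp add: closed_segment_on_line)
  ultimately have "closed_segment (x + m *\<^sub>R d) (x + M *\<^sub>R d) \<subseteq> ncircle N c r"
    and "closed_segment x y \<subseteq> closed_segment (x + m *\<^sub>R d) (x + M *\<^sub>R d)"
    using mM by (auto simp: ncircle_def algebra_simps)
  then have "closed_segment (x + m *\<^sub>R d) (x + M *\<^sub>R d) = closed_segment x y"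
    using mx unfolding maximal_segment_def by blast
  then have "(\<lambda>t. x + t *\<^sub>R d) ` {m..M} = (\<lambda>t. x + t *\<^sub>R d) ` {0..1}"
    unfolding seg01 segmM .
  moreover have "inj (\<lambda>t. x + t *\<^sub>R d)" using d by (auto simp: inj_on_def)
  ultimately have "{m..M} = {0..1::real}" by (simp add: inj_image_eq_iff)
  then show ?thesis using mM by (auto simp: Icc_eq_Icc m_def M_def min_def max_def split: if_splits)
qed

text \<open>The homothety with centre \<open>c\<close> and ratio \<open>r / \<rho>\<close> maps the given segment onto a segment of
the circle about \<open>c\<close>; the level condition puts it on \<open>\<langle>xy\<rangle>\<close>, where maximality keeps it
inside \<open>[xy]\<close>.\<close>

lemma maximal_segment_scaled_within:
  assumes mx: "maximal_segment (ncircle N c r) x y" and r: "0 < r"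
    and s: "circle_seg (y - x) w \<rho> \<alpha> \<beta>"
    and lev: "\<rho> * wedge (y - x) (x - c) = r * wedge (y - x) w"
  shows "\<exists>a. c + (r / \<rho>) *\<^sub>R (w + \<alpha> *\<^sub>R (y - x)) = x + a *\<^sub>R (y - x) \<and> 0 \<le> a \<and> a + r * (\<beta> - \<alpha>) / \<rho> \<le> 1"
proof -
  define d where "d = y - x"
  have d: "d \<noteq> 0" using mx by (auto simp: maximal_segment_def d_def)
  have \<rho>: "0 < \<rho>" "\<alpha> < \<beta>" using s by (auto simp: circle_seg_def)
  define k where "k = r / \<rho>"
  have k: "0 < k" using r \<rho> by (simp add: k_def)
  have "wedge d (x - c - k *\<^sub>R w) = 0" using lev \<rho> by (simp add: k_def d_def field_simps)
  then obtain e where e: "x - c - k *\<^sub>R w = e *\<^sub>R d" using wedge_eq_0_iff[OF d] by blast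
  have x: "x = c + k *\<^sub>R w + e *\<^sub>R d" by (simp add: e[symmetric] algebra_simps)
  define a where "a = k * \<alpha> - e"
  have "N (x - c + \<tau> *\<^sub>R d) = r" if \<tau>: "a \<le> \<tau>" "\<tau> \<le> a + k * (\<beta> - \<alpha>)" for \<tau>
  proof -
    define t where "t = (e + \<tau>) / k"
    have t: "t \<in> {\<alpha>..\<beta>}" using \<tau> k by (auto simp: t_def a_def field_simps)
    have "k *\<^sub>R (w + t *\<^sub>R d) = k *\<^sub>R w + (k * t) *\<^sub>R d" by (simp add: scaleR_add_right)
    also have "\<dots> = k *\<^sub>R w + (e + \<tau>) *\<^sub>R d" using k by (simp add: t_def)
    also have "\<dots> = x - c + \<tau> *\<^sub>R d" by (simp add: x algebra_simps)
    finally have "N (x - c + \<tau> *\<^sub>R d) = k * N (w + t *\<^sub>R d)"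
      using k by (metis N_scaleR abs_of_pos)
    also have "N (w + t *\<^sub>R d) = \<rho>" using s t by (simp add: circle_seg_def d_def)
    finally show ?thesis using \<rho> by (simp add: k_def)
  qed
  then have "0 \<le> a \<and> a + k * (\<beta> - \<alpha>) \<le> 1"
    using maximal_segment_line_bound[OF mx r, of a "a + k * (\<beta> - \<alpha>)"] k \<rho> by (simp add: d_def)
  moreover have "c + k *\<^sub>R (w + \<alpha> *\<^sub>R d) = x + a *\<^sub>R d" by (simp add: x a_def algebra_simps)
  ultimately show ?thesis by (auto simp: k_def d_def)
qed

end

locale two_circles = plane_norm +
  fixes x y p q :: "real^2" and rp rq :: real
  assumes p_ne_q: "p \<noteq> q" and rp: "0 < rp" and rq: "0 < rq"
    and max_p: "maximal_segment (ncircle N p rp) x y"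
    and max_q: "maximal_segment (ncircle N q rq) x y"
begin

abbreviation d :: "real^2" where "d \<equiv> y - x"

lemma d_nonzero: "d \<noteq> 0"
  using max_p by (auto simp: maximal_segment_def)

lemma wedge_y [simp]: "wedge d y = wedge d x"
  using wedge_self[of d] unfolding wedge_diff by simp

lemma circle_seg_p: "circle_seg d (x - p) rp 0 1"
  by (rule maximal_segment_circle_seg[OF max_p rp])

lemma circle_seg_q: "circle_seg d (x - q) rq 0 1"
  by (rule maximal_segment_circle_seg[OF max_q rq])

text \<open>If the levels agreed, each centre would see the segment of the other circle, rescaled,
on \<open>\<langle>xy\<rangle>\<close> inside \<open>[xy]\<close>; this forces \<open>rp = rq\<close> and then \<open>p = q\<close>.\<close>

lemma centers_opposite: "rq * wedge d (x - p) = - rp * wedge d (x - q)"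
proof -
  have ratio: "\<bar>rq * wedge d (x - p)\<bar> = \<bar>rp * wedge d (x - q)\<bar>"
    using circle_seg_level_ratio[OF d_nonzero circle_seg_p circle_seg_q] rp rq by (simp add: abs_mult)
  have "rq * wedge d (x - p) \<noteq> rp * wedge d (x - q)"
  proof
    assume lev: "rq * wedge d (x - p) = rp * wedge d (x - q)"
    obtain a where a: "p + (rp / rq) *\<^sub>R (x - q) = x + a *\<^sub>R d" "0 \<le> a" "a + rp / rq \<le> 1"
      using maximal_segment_scaled_within[OF max_p rp circle_seg_q lev] by auto
    obtain b where "0 \<le> b" "b + rq / rp \<le> 1"
      using maximal_segment_scaled_within[OF max_q rq circle_seg_p lev[symmetric]] by auto
    then have "rp / rq \<le> 1" "rq / rp \<le> 1" using a by linarith+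
    then have "rp = rq" using rp rq by (simp add: divide_le_eq)
    then have "p = q" using a rp by (simp add: algebra_simps)
    with p_ne_q show False by contradiction
  qed
  with ratio show ?thesis by arith
qed

text \<open>Reflecting the segment of the circle about \<open>q\<close> through the origin gives a segment on the
side of \<open>p\<close> at the matching level, so each radius bounds the other.\<close>

lemma radii_eq: "rp = rq"
proof -
  have "wedge d (- (x - q) - (0 + 1) *\<^sub>R d) = - wedge d (x - q)"
    and "wedge d (- (x - p) - (0 + 1) *\<^sub>R d) = - wedge d (x - p)" by simp_all
  then have "rq * wedge d (x - p) = rp * wedge d (- (x - q) - (0 + 1) *\<^sub>R d)"
    and "rp * wedge d (x - q) = rq * wedge d (- (x - p) - (0 + 1) *\<^sub>R d)"
    using centers_opposite by (simp_all only: mult_minus_right mult_minus_left)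
  then obtain a b where "0 \<le> a" "a + rp / rq \<le> 1" "0 \<le> b" "b + rq / rp \<le> 1"
    using maximal_segment_scaled_within[OF max_p rp circle_seg_reflect[OF circle_seg_q]]
      maximal_segment_scaled_within[OF max_q rq circle_seg_reflect[OF circle_seg_p]] by force
  then have "rp / rq \<le> 1" "rq / rp \<le> 1" by linarith+
  then show ?thesis using rp rq by (simp add: divide_le_eq)
qed

lemma wedge_x_minus_q: "wedge d (x - q) = - wedge d (x - p)"
proof -
  have "rq * wedge d (x - q) = rq * (- wedge d (x - p))"
    using centers_opposite unfolding radii_eq by (simp only: mult_minus_right mult_minus_left)
  then show ?thesis using rq by (simp only: mult_cancel_left) simp
qed

lemma wedge_in_strip_iff:
  "wedge d z \<in> closed_segment (wedge d p) (wedge d q) \<longleftrightarrow> \<bar>wedge d (z - x)\<bar> \<le> \<bar>wedge d (x - p)\<bar>"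
proof -
  have "wedge d p = wedge d x - wedge d (x - p)" "wedge d q = wedge d x + wedge d (x - p)"
    and "wedge d (z - x) = wedge d z - wedge d x"
    using wedge_x_minus_q by simp_all
  then show ?thesis by (simp only: closed_segment_real_symmetric)
qed

lemma long_circle_seg_level:
  assumes s: "circle_seg d w c \<alpha> \<beta>" and long: "1 < \<beta> - \<alpha>"
  shows "\<bar>wedge d (x - p)\<bar> < \<bar>wedge d w\<bar>"
proof -
  have c: "0 < c" using s by (simp add: circle_seg_def)
  have ratio: "\<bar>c * wedge d (x - p)\<bar> = \<bar>rp * wedge d w\<bar>"
    using circle_seg_level_ratio[OF d_nonzero circle_seg_p s] c rp by (simp add: abs_mult)
  have "rp * (\<beta> - \<alpha>) / c \<le> 1"
  proof (cases "c * wedge d (x - p) = rp * wedge d w")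
    case True
    then obtain a where "0 \<le> a" "a + rp * (\<beta> - \<alpha>) / c \<le> 1"
      using maximal_segment_scaled_within[OF max_p rp s] by blast
    then show ?thesis by linarith
  next
    case False
    with ratio have "c * wedge d (x - p) = - (rp * wedge d w)" by arith
    then have "c * wedge d (x - q) = rq * wedge d w"
      by (simp del: wedge_diff add: wedge_x_minus_q radii_eq)
    then obtain a where "0 \<le> a" "a + rq * (\<beta> - \<alpha>) / c \<le> 1"
      using maximal_segment_scaled_within[OF max_q rq s] by blast
    then show ?thesis unfolding radii_eq by linarith
  qed
  then have "rp * (\<beta> - \<alpha>) \<le> c" using c by (simp add: divide_le_eq)
  moreover have "rp < rp * (\<beta> - \<alpha>)" using rp long by simp
  ultimately have "rp * \<bar>wedge d (x - p)\<bar> < c * \<bar>wedge d (x - p)\<bar>"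
    using circle_seg_wedge_nonzero[OF d_nonzero circle_seg_p] by simp
  also have "c * \<bar>wedge d (x - p)\<bar> = rp * \<bar>wedge d w\<bar>" using ratio rp c by (simp add: abs_mult)
  finally show ?thesis using rp by simp
qed

lemma bisector_twice_outside_strip:
  assumes "N (z - x) = N (z - y)" "N (z + \<epsilon> *\<^sub>R d - x) = N (z + \<epsilon> *\<^sub>R d - y)" "0 < \<epsilon>"
  shows "\<bar>wedge d (x - p)\<bar> < \<bar>wedge d (z - x)\<bar>"
proof -
  have "N (z - x) = N (z - x - d)" "N (z - x + \<epsilon> *\<^sub>R d) = N (z - x + (\<epsilon> - 1) *\<^sub>R d)"
    using assms by (simp_all add: algebra_simps)
  then obtain c e where "0 < e" "circle_seg d (z - x) c (- 1) e"
    using bisector_twice_circle_seg[OF d_nonzero \<open>0 < \<epsilon>\<close>] by blast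
  then show ?thesis using long_circle_seg_level by force
qed

definition bisector_strip :: "(real^2) set" where
  "bisector_strip = {z. N (z - x) = N (z - y) \<and> wedge d z \<in> closed_segment (wedge d p) (wedge d q)}"

lemma bis_Int_hull_eq: "bis N x y \<inter> convex hull (par_line p d \<union> par_line q d) = bisector_strip"
  unfolding convex_hull_parallel_lines[OF d_nonzero] bis_def bisector_strip_def by blast

lemma center_in_bisector_strip:
  assumes "maximal_segment (ncircle N c r) x y" and "wedge d c \<in> closed_segment (wedge d p) (wedge d q)"
  shows "c \<in> bisector_strip"
proof -
  have sub: "closed_segment x y \<subseteq> ncircle N c r"
    using assms(1) by (simp add: maximal_segment_def)
  have "N (x - c) = r" "N (y - c) = r"
    using subsetD[OF sub ends_in_segment(1)] subsetD[OF sub ends_in_segment(2)] by (simp_all add: ncircle_def)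
  then have "N (c - x) = N (c - y)" using N_commute[of x c] N_commute[of y c] by simp
  then show ?thesis using assms(2) by (simp add: bisector_strip_def)
qed

lemma centers_in_bisector_strip: "p \<in> bisector_strip" "q \<in> bisector_strip"
  using center_in_bisector_strip[OF max_p] center_in_bisector_strip[OF max_q] by simp_all

lemma inj_on_wedge_bisector_strip: "inj_on (wedge d) bisector_strip"
proof
  fix z1 z2 assume z: "z1 \<in> bisector_strip" "z2 \<in> bisector_strip" and "wedge d z1 = wedge d z2"
  then obtain e where "z2 - z1 = e *\<^sub>R d" using wedge_eq_0_iff[OF d_nonzero] by force
  then have e1: "z2 = z1 + e *\<^sub>R d" by (metis add.commute diff_add_cancel)
  then have e2: "z1 = z2 + (- e) *\<^sub>R d" by simp
  have no_pair: False if "u \<in> bisector_strip" "u + \<epsilon> *\<^sub>R d \<in> bisector_strip" "0 < \<epsilon>" for u \<epsilon>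
    using that bisector_twice_outside_strip[of u \<epsilon>] wedge_in_strip_iff by (force simp: bisector_strip_def)
  show "z1 = z2"
  proof (cases e "0::real" rule: linorder_cases)
    case less
    then show ?thesis using no_pair[of z2 "- e"] z e2 by simp
  next
    case greater
    then show ?thesis using no_pair[of z1 e] z e1 by simp
  qed (use e1 in simp)
qed

lemma closed_bisector_strip: "closed bisector_strip"
proof -
  have "closed {z. N (z - x) = N (z - y)}"
    by (intro closed_Collect_eq continuous_intros)
  moreover have "closed (wedge d -` closed_segment (wedge d p) (wedge d q))"
    by (intro closed_vimage closed_segment continuous_intros)
  ultimately show ?thesis
    unfolding bisector_strip_def vimage_def Collect_conj_eq by (rule closed_Int)
qed

lemma bounded_bisector_strip: "bounded bisector_strip"
proof -
  obtain n where n: "wedge d n = 1" using wedge_surj[OF d_nonzero] by blast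
  define M where "M = \<bar>wedge d (x - p)\<bar>"
  define T where "T = 1 + 2 * (M * N n) / N d"
  have "bisector_strip \<subseteq> (\<lambda>(s, t). x + s *\<^sub>R n + t *\<^sub>R d) ` ({- M..M} \<times> {- T..T})"
  proof
    fix z assume z: "z \<in> bisector_strip"
    obtain t where t: "z - x = wedge d (z - x) *\<^sub>R n + t *\<^sub>R d" using wedge_decompose[OF n] by blast
    define A where "A = wedge d (z - x) *\<^sub>R n"
    have s: "\<bar>wedge d (z - x)\<bar> \<le> M" using z wedge_in_strip_iff by (simp add: bisector_strip_def M_def)
    have zx: "z - x = A + t *\<^sub>R d" unfolding A_def by (rule t)
    have "z - y = (z - x) - d" by simp
    also have "\<dots> = A + (t - 1) *\<^sub>R d" unfolding zx by (simp add: algebra_simps)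
    finally have "N (A + t *\<^sub>R d) = N (A + (t - 1) *\<^sub>R d)"
      using z zx by (simp add: bisector_strip_def)
    then have "\<bar>t\<bar> \<le> 1 + 2 * N A / N d" by (rule bisector_offset_bound[OF d_nonzero])
    also have "N A \<le> M * N n" using s N_nonneg[of n] by (simp add: A_def N_scaleR mult_right_mono)
    then have "1 + 2 * N A / N d \<le> T"
      using N_pos[OF d_nonzero] by (simp add: T_def divide_right_mono)
    finally have "t \<in> {- T..T}" by auto
    moreover have "z = x + wedge d (z - x) *\<^sub>R n + t *\<^sub>R d" using t by (simp add: algebra_simps)
    ultimately show "z \<in> (\<lambda>(s, t). x + s *\<^sub>R n + t *\<^sub>R d) ` ({- M..M} \<times> {- T..T})"
      using s by force
  qed
  moreover have "compact ((\<lambda>(s, t). x + s *\<^sub>R n + t *\<^sub>R d) ` ({- M..M} \<times> {- T..T}))"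
    by (intro compact_continuous_image compact_Times compact_Icc)
      (auto intro!: continuous_intros simp: case_prod_unfold)
  ultimately show ?thesis using bounded_subset compact_imp_bounded by blast
qed

lemma wedge_image_bisector_strip:
  "wedge d ` bisector_strip = closed_segment (wedge d p) (wedge d q)"
proof
  show "closed_segment (wedge d p) (wedge d q) \<subseteq> wedge d ` bisector_strip"
  proof
    fix s assume s: "s \<in> closed_segment (wedge d p) (wedge d q)"
    obtain n where n: "wedge d n = 1" using wedge_surj[OF d_nonzero] by blast
    define A where "A = (s - wedge d x) *\<^sub>R n"
    obtain t where t: "N (A + t *\<^sub>R d) = N (A + (t - 1) *\<^sub>R d)"
      using bisector_meets_line[OF d_nonzero] by blast
    define z where "z = x + A + t *\<^sub>R d"
    have "N (z - x) = N (z - y)" using t by (simp add: z_def algebra_simps)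
    moreover have "wedge d z = s" using n by (simp add: z_def A_def)
    ultimately show "s \<in> wedge d ` bisector_strip" using s by (force simp: bisector_strip_def)
  qed
qed (auto simp: bisector_strip_def)

lemma bisector_strip_arc:
  "\<exists>g. arc g \<and> pathstart g = p \<and> pathfinish g = q \<and> path_image g = bisector_strip"
proof (rule arc_of_injective_map_onto_segment)
  show "compact bisector_strip"
    using closed_bisector_strip bounded_bisector_strip by (simp add: compact_eq_bounded_closed)
qed (use inj_on_wedge_bisector_strip wedge_image_bisector_strip centers_in_bisector_strip p_ne_q
       in \<open>auto intro: continuous_on_wedge[OF continuous_on_id]\<close>)

end

theorem proposition2p4:
  fixes N :: "real^2 \<Rightarrow> real" and x y p q :: "real^2" and rp rq :: real
  assumes "is_norm N"
    and "x \<noteq> y"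
    and "\<exists>a b. a \<noteq> b \<and> closed_segment a b \<subseteq> unit_circle N \<and> seg_parallel x y a b"
    and "p \<noteq> q"
    and "rp > 0" and "maximal_segment (ncircle N p rp) x y"
    and "rq > 0" and "maximal_segment (ncircle N q rq) x y"
  shows "\<exists>g. arc g \<and> pathstart g = p \<and> pathfinish g = q \<and>
           path_image g = bis N x y \<inter> convex hull (par_line p (y - x) \<union> par_line q (y - x))"
proof -
  interpret two_circles N x y p q rp rq
    by unfold_locales (use assms in auto)
  show ?thesis using bisector_strip_arc bis_Int_hull_eq by simp
qed

end
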